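(* Let $\delta=10^{-10}$, let $k\ge\delta^{-2}$ be an integer, and let $G$ be a graph on $n\le(1+\delta)k$ vertices with average degree $d(G)>k-1$. Set $a:=n-k$ and let $b$ be the number of vertices of $G$ of degree at most $\frac{2k}{3}+a$. Suppose that the maximum degree satisfies $\Delta(G)<k+b$. Then more than $k/6$ vertices of $G$ have degree at least $k$.
   Context: The average degree of a graph $G$ is $d(G)=2|E(G)|/|V(G)|$; $\Delta(G)$ is the maximum degree. *)

theory Defs
  imports Complex_Main
begin

definition simple_graph :: "'a set \<Rightarrow> 'a set set \<Rightarrow> bool" where
  "simple_graph V E \<longleftrightarrow> finite V \<and> (\<forall>e\<in>E. e \<subseteq> V \<and> card e = 2)"

definition degree :: "'a set set \<Rightarrow> 'a \<Rightarrow> nat" where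
  "degree E v = card {e \<in> E. v \<in> e}"

definition avg_degree :: "'a set \<Rightarrow> 'a set set \<Rightarrow> real" where
  "avg_degree V E = 2 * real (card E) / real (card V)"

definition max_degree :: "'a set \<Rightarrow> 'a set set \<Rightarrow> nat" where
  "max_degree V E = Max (degree E ` V)"

end

theory Submission
  imports Defs
begin

text \<open>Let \<open>S\<close> be the set of vertices of degree at least \<open>k\<close> and \<open>B\<close> the set of \<open>b\<close> vertices of
  degree at most a threshold \<open>t < k\<close>. Every vertex has degree at most \<open>k - 1\<close>, except those
  in \<open>S\<close>, which exceed this by less than \<open>b\<close> because \<open>\<Delta>(G) < k + b\<close>; those in \<open>B\<close> fall short
  of it by at least \<open>k - 1 - t\<close>. As the degree sum exceeds \<open>(k - 1) n\<close>, summing gives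
  \<open>|S| b > b (k - 1 - t)\<close>, hence \<open>|S| > k - 1 - t\<close>. With \<open>t = 2k/3 + a\<close> and \<open>a \<le> \<delta> k\<close>
  this is \<open>k/3 - \<delta> k - 1 \<ge> k/6\<close>.\<close>

lemma handshake:
  assumes "simple_graph V E"
  shows "(\<Sum>v\<in>V. real (degree E v)) = 2 * real (card E)"
proof -
  have fV: "finite V" and edge: "\<And>e. e \<in> E \<Longrightarrow> e \<subseteq> V \<and> card e = 2"
    using assms unfolding simple_graph_def by auto
  have fE: "finite E"
    by (rule finite_subset[of E "Pow V"]) (use fV edge in auto)
  have "(\<Sum>v\<in>V. real (degree E v)) = (\<Sum>v\<in>V. \<Sum>e\<in>E. if v \<in> e then 1 else (0::real))"
    unfolding degree_def using fE by (simp add: sum.If_cases Int_def conj_commute)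
  also have "\<dots> = (\<Sum>e\<in>E. \<Sum>v\<in>V. if v \<in> e then 1 else (0::real))"
    by (rule sum.swap)
  also have "\<dots> = (\<Sum>e\<in>E. 2)"
  proof (rule sum.cong[OF refl])
    fix e assume "e \<in> E"
    with edge have "V \<inter> e = e" "card e = 2" by auto
    then show "(\<Sum>v\<in>V. if v \<in> e then 1 else (0::real)) = 2"
      using fV by (simp add: sum.If_cases)
  qed
  finally show ?thesis by simp
qed

lemma degree_le_max_degree:
  assumes "simple_graph V E" and "v \<in> V"
  shows "degree E v \<le> max_degree V E"
  using assms unfolding simple_graph_def max_degree_def by simp

lemma degree_sum_gt_if_avg_degree_gt:
  assumes "simple_graph V E" and "avg_degree V E > c" and "V \<noteq> {}"
  shows "(\<Sum>v\<in>V. real (degree E v)) > c * real (card V)"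
proof -
  have "card V > 0"
    using assms(1,3) unfolding simple_graph_def by (simp add: card_gt_0_iff)
  then show ?thesis
    using handshake[OF assms(1)] assms(2) unfolding avg_degree_def by (simp add: field_simps)
qed

lemma card_high_degree_gt:
  fixes V :: "'a set" and E :: "'a set set" and k :: nat and t :: real
  defines "S \<equiv> {v \<in> V. degree E v \<ge> k}" and "B \<equiv> {v \<in> V. real (degree E v) \<le> t}"
  assumes G: "simple_graph V E"
    and avg: "avg_degree V E > real k - 1"
    and t: "t < real k"
    and Delta: "max_degree V E < k + card B"
  shows "real (card S) > real k - 1 - t"
proof -
  have fV: "finite V" using G unfolding simple_graph_def by simp
  have "V \<noteq> {}"
  proof
    assume "V = {}"
    then have "B = {}" "avg_degree V E = 0" by (simp_all add: B_def avg_degree_def)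
    then show False using avg Delta by simp
  qed
  let ?b = "real (card B)"
  have deg: "real (degree E v) \<le> (real k - 1) + (if v \<in> S then ?b else 0)
      - (if v \<in> B then real k - 1 - t else 0)" if v: "v \<in> V" for v
  proof (cases "v \<in> S")
    case True
    then have "v \<notin> B" using t by (auto simp: S_def B_def)
    have "degree E v < k + card B"
      using degree_le_max_degree[OF G v] Delta by simp
    then show ?thesis using True \<open>v \<notin> B\<close> by simp
  next
    case False
    then have "degree E v < k" using v by (simp add: S_def)
    then show ?thesis using False by (auto simp: B_def)
  qed
  have "S = V \<inter> S" "B = V \<inter> B" unfolding S_def B_def by auto
  have "(real k - 1) * real (card V) < (\<Sum>v\<in>V. real (degree E v))"
    by (rule degree_sum_gt_if_avg_degree_gt[OF G avg \<open>V \<noteq> {}\<close>])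
  also have "\<dots> \<le> (\<Sum>v\<in>V. (real k - 1) + (if v \<in> S then ?b else 0)
      - (if v \<in> B then real k - 1 - t else 0))"
    by (rule sum_mono) (rule deg)
  also have "\<dots> = (real k - 1) * real (card V) + real (card S) * ?b - ?b * (real k - 1 - t)"
    using fV by (simp add: sum.distrib sum_subtractf sum.If_cases
        flip: \<open>S = V \<inter> S\<close> \<open>B = V \<inter> B\<close>)
  finally have "?b * (real (card S) - (real k - 1 - t)) > 0"
    by (simp add: algebra_simps)
  then show ?thesis by (simp add: zero_less_mult_iff)
qed

theorem mainTheorem4:
  fixes V :: "'a set" and E :: "'a set set" and k :: nat and \<delta> :: real
  assumes "\<delta> = 10 powr (-10)"
    and "real k \<ge> 1 / \<delta>^2"
    and "simple_graph V E"
    and "real (card V) \<le> (1 + \<delta>) * real k"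
    and "avg_degree V E > real k - 1"
    and "a = real (card V) - real k"
    and "b = card {v \<in> V. real (degree E v) \<le> 2 * real k / 3 + a}"
    and "max_degree V E < k + b"
  shows "real (card {v \<in> V. degree E v \<ge> k}) > real k / 6"
proof -
  have \<delta>: "\<delta> = 1 / 10^10" using assms(1) by (simp add: powr_minus powr_realpow)
  have k: "real k \<ge> 10^20" using assms(2) \<delta> by (simp add: power_one_over)
  have a: "a \<le> real k / 10^10" using assms(4,6) \<delta> by (simp add: algebra_simps)
  have "real (card {v \<in> V. degree E v \<ge> k}) > real k - 1 - (2 * real k / 3 + a)"
  proof (rule card_high_degree_gt[OF assms(3,5)])
    show "2 * real k / 3 + a < real k" using a k by simp
    show "max_degree V E < k + card {v \<in> V. real (degree E v) \<le> 2 * real k / 3 + a}"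
      using assms(7,8) by simp
  qed
  then show ?thesis using a k by simp
qed

end
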